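(* The functor $G=P\circ P_+\big|_\Omega:\Omega\rightarrow\Sigma$ is injective on objects and morphisms. Thus, there exists an $\Omega$ category $G\Omega$ having the functor $G$ with the target category restricted from $\Sigma$ to $G\Omega$ as its stalk isofunctor. Furthermore, $G\Omega$ is a non monoidal subcategory of $\Sigma$.
   Context: $\Sigma$ is the category of finite sets and functions; $\Omega$ is its full subcategory of finite von Neumann ordinals $[l]=\{0,\dots,l-1\}$ ($[0]=\emptyset$), strict monoidal with $[l]\smile[m]=[l+m]$, $f\smile g(i)=f(i)$ for $i\in[l]$ and $g(i-l)+p$ for $i\in[m]+l$ (for $f:[l]\to[p]$, $g:[m]\to[q]$), unit $[0]$. $P:\Sigma\to\Sigma$ is the finite power set endofunctor ($PA$ the set of subsets of $A$, $P\phi(X)=\phi(X)$), and $P_+:\Sigma\to\Sigma$ the non empty power set endofunctor ($P_+A$ the set of non empty subsets, $P_+\phi(X)=\phi(X)$). An $\Omega$ category is a Pro category $D\Omega$ with a strict monoidal isofunctor (stalk isofunctor) $D:\Omega\to D\Omega$; given a functor $D$ injective on objects and morphisms, the $\Omega$ category $D\Omega$ has objects $D[l]$, morphisms $Df$, composition $Dg\circ Df=D(g\circ f)$, identities $D\,\mathrm{id}_{[l]}$, monoidal products $D[l]\smile D[m]=D([l]\smile[m])$, $Df\smile Dg=D(f\smile g)$ and unit $D[0]$. *)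

theory Defs
  imports Main "HOL-Library.FuncSet"
begin

text \<open>Morphisms of Sigma (finite sets and functions) are triples (A, B, phi)
  with phi an extensional function from A to B.\<close>

type_synonym 'a smor = "'a set \<times> 'a set \<times> ('a \<Rightarrow> 'a)"

definition Sigma_mor :: "('a set \<times> 'b set \<times> ('a \<Rightarrow> 'b)) set" where
  "Sigma_mor = {(A, B, phi). finite A \<and> finite B \<and> phi \<in> A \<rightarrow>\<^sub>E B}"

definition Sigma_comp ::
  "('b set \<times> 'c set \<times> ('b \<Rightarrow> 'c)) \<Rightarrow> ('a set \<times> 'b set \<times> ('a \<Rightarrow> 'b))
     \<Rightarrow> ('a set \<times> 'c set \<times> ('a \<Rightarrow> 'c))" where
  "Sigma_comp g f = (fst f, fst (snd g), compose (fst f) (snd (snd g)) (snd (snd f)))"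

definition Sigma_id :: "'a set \<Rightarrow> ('a set \<times> 'a set \<times> ('a \<Rightarrow> 'a))" where
  "Sigma_id A = (A, A, restrict id A)"

definition Pobj :: "'a set \<Rightarrow> 'a set set" where
  "Pobj A = Pow A"

definition Pmor :: "('a set \<times> 'b set \<times> ('a \<Rightarrow> 'b)) \<Rightarrow> ('a set set \<times> 'b set set \<times> ('a set \<Rightarrow> 'b set))" where
  "Pmor m = (case m of (A, B, phi) \<Rightarrow> (Pobj A, Pobj B, restrict (\<lambda>X. phi ` X) (Pobj A)))"

definition Ppobj :: "'a set \<Rightarrow> 'a set set" where
  "Ppobj A = {X. X \<subseteq> A \<and> X \<noteq> {}}"

definition Ppmor :: "('a set \<times> 'b set \<times> ('a \<Rightarrow> 'b)) \<Rightarrow> ('a set set \<times> 'b set set \<times> ('a set \<Rightarrow> 'b set))" where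
  "Ppmor m = (case m of (A, B, phi) \<Rightarrow> (Ppobj A, Ppobj B, restrict (\<lambda>X. phi ` X) (Ppobj A)))"

text \<open>Omega: objects [l] = {0..<l}; morphisms f : [l] -> [p].\<close>

definition ord :: "nat \<Rightarrow> nat set" where
  "ord l = {..<l}"

definition Omega_mor :: "(nat set \<times> nat set \<times> (nat \<Rightarrow> nat)) set" where
  "Omega_mor = {(ord l, ord p, f) | l p f. f \<in> ord l \<rightarrow>\<^sub>E ord p}"

definition Gobj :: "nat \<Rightarrow> nat set set set" where
  "Gobj l = Pobj (Ppobj (ord l))"

definition Gmor :: "(nat set \<times> nat set \<times> (nat \<Rightarrow> nat)) \<Rightarrow> (nat set set set \<times> nat set set set \<times> (nat set set \<Rightarrow> nat set set))" where
  "Gmor m = Pmor (Ppmor m)"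

end

theory Submission
  imports Defs
begin

text \<open>
  P and P_+ act on a morphism phi by direct image, so both are endofunctors of Sigma, and so
  is their composite G.  Both are injective on objects, since the union of P A or of P_+ A is A,
  and injective on morphisms, since a morphism is an extensional function and the image of the
  singleton {i} is {phi i}.  Omega is a subcategory of Sigma whose objects [l] determine l, so
  all of this survives restriction to Omega.  Finally |G[l]| = 2^(2^l - 1), so |G[2]| = 8 is neither
  |G[1]| + |G[1]| = 4 nor |G[1]| * |G[1]| = 4: G does not carry the monoidal product of
  Omega to disjoint union or product in Sigma.
\<close>

lemma restrict_image_id:
  assumes "\<And>X. X \<in> S \<Longrightarrow> X \<subseteq> A"
  shows "(\<lambda>X\<in>S. restrict id A ` X) = restrict id S"
proof (rule restrict_ext)
  fix X assume "X \<in> S"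
  then show "restrict id A ` X = id X" using assms by (force simp: image_iff)
qed

lemma restrict_image_compose:
  assumes "\<And>X. X \<in> S \<Longrightarrow> X \<subseteq> A \<and> f ` X \<in> T"
  shows "(\<lambda>X\<in>S. compose A g f ` X) = compose S (\<lambda>Y\<in>T. g ` Y) (\<lambda>X\<in>S. f ` X)"
proof (rule ext)
  fix X show "(\<lambda>X\<in>S. compose A g f ` X) X = compose S (\<lambda>Y\<in>T. g ` Y) (\<lambda>X\<in>S. f ` X) X"
    using assms[of X] by (auto simp: compose_def image_iff)
qed

lemma extensional_eq_if_restrict_image_eq:
  assumes "f \<in> extensional A" and "g \<in> extensional A"
    and "(\<lambda>X\<in>S. f ` X) = (\<lambda>X\<in>S. g ` X)" and "\<And>i. i \<in> A \<Longrightarrow> {i} \<in> S"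
  shows "f = g"
proof (rule extensionalityI[OF assms(1,2)])
  fix i assume "i \<in> A"
  then show "f i = g i" using fun_cong[OF assms(3), of "{i}"] assms(4) by simp
qed

lemma inj_Pobj: "inj Pobj"
  by (rule injI) (metis Pobj_def Union_Pow_eq)

lemma Union_Ppobj [simp]: "\<Union>(Ppobj A) = A"
  unfolding Ppobj_def by blast

lemma inj_Ppobj: "inj Ppobj"
  by (rule injI) (metis Union_Ppobj)

lemma finite_Ppobj: "finite A \<Longrightarrow> finite (Ppobj A)"
  unfolding Ppobj_def by simp

lemma card_Ppobj: "finite A \<Longrightarrow> card (Ppobj A) = 2 ^ card A - 1"
proof -
  assume "finite A"
  moreover have "Ppobj A = Pow A - {{}}" unfolding Ppobj_def by blast
  ultimately show ?thesis by (simp add: card_Pow card_Diff_singleton)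
qed

lemma Pmor_Sigma_id: "Pmor (Sigma_id A) = Sigma_id (Pobj A)"
proof -
  have "(\<lambda>X\<in>Pobj A. restrict id A ` X) = restrict id (Pobj A)"
    by (rule restrict_image_id) (simp add: Pobj_def)
  then show ?thesis unfolding Pmor_def Sigma_id_def by (simp only: prod.case)
qed

lemma Ppmor_Sigma_id: "Ppmor (Sigma_id A) = Sigma_id (Ppobj A)"
proof -
  have "(\<lambda>X\<in>Ppobj A. restrict id A ` X) = restrict id (Ppobj A)"
    by (rule restrict_image_id) (simp add: Ppobj_def)
  then show ?thesis unfolding Ppmor_def Sigma_id_def by (simp only: prod.case)
qed

lemma Pmor_Sigma_comp:
  assumes "f \<in> Sigma_mor" and "fst (snd f) = fst g"
  shows "Pmor (Sigma_comp g f) = Sigma_comp (Pmor g) (Pmor f)"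
proof -
  obtain A B phi where f: "f = (A, B, phi)" and phi: "phi \<in> A \<rightarrow> B"
    using assms(1) unfolding Sigma_mor_def by (auto simp: PiE_iff)
  obtain C psi where g: "g = (B, C, psi)"
    using assms(2) f by (cases g) auto
  have "(\<lambda>X\<in>Pobj A. compose A psi phi ` X)
      = compose (Pobj A) (\<lambda>Y\<in>Pobj B. psi ` Y) (\<lambda>X\<in>Pobj A. phi ` X)"
    by (rule restrict_image_compose) (use phi in \<open>auto simp: Pobj_def\<close>)
  then show ?thesis
    unfolding f g Pmor_def Sigma_comp_def by (simp only: prod.case fst_conv snd_conv)
qed

lemma Ppmor_Sigma_comp:
  assumes "f \<in> Sigma_mor" and "fst (snd f) = fst g"
  shows "Ppmor (Sigma_comp g f) = Sigma_comp (Ppmor g) (Ppmor f)"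
proof -
  obtain A B phi where f: "f = (A, B, phi)" and phi: "phi \<in> A \<rightarrow> B"
    using assms(1) unfolding Sigma_mor_def by (auto simp: PiE_iff)
  obtain C psi where g: "g = (B, C, psi)"
    using assms(2) f by (cases g) auto
  have "(\<lambda>X\<in>Ppobj A. compose A psi phi ` X)
      = compose (Ppobj A) (\<lambda>Y\<in>Ppobj B. psi ` Y) (\<lambda>X\<in>Ppobj A. phi ` X)"
    by (rule restrict_image_compose) (use phi in \<open>auto simp: Ppobj_def\<close>)
  then show ?thesis
    unfolding f g Ppmor_def Sigma_comp_def by (simp only: prod.case fst_conv snd_conv)
qed

lemma Pmor_in_Sigma_mor: "m \<in> Sigma_mor \<Longrightarrow> Pmor m \<in> Sigma_mor"
  unfolding Sigma_mor_def Pmor_def Pobj_def by (force simp: PiE_iff)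

lemma Ppmor_in_Sigma_mor: "m \<in> Sigma_mor \<Longrightarrow> Ppmor m \<in> Sigma_mor"
  unfolding Sigma_mor_def Ppmor_def Ppobj_def by (force simp: PiE_iff)

lemma inj_on_Pmor: "inj_on Pmor Sigma_mor"
proof (rule inj_onI)
  fix m m' assume "m \<in> Sigma_mor" "m' \<in> Sigma_mor" and eq: "Pmor m = Pmor m'"
  then obtain A B phi A' B' phi' where m: "m = (A, B, phi)" "phi \<in> extensional A"
    and m': "m' = (A', B', phi')" "phi' \<in> extensional A'"
    unfolding Sigma_mor_def by (auto simp: PiE_iff)
  from eq have "Pobj A = Pobj A'" "Pobj B = Pobj B'"
    unfolding m m' Pmor_def by simp_all
  then have "A = A'" "B = B'" using inj_Pobj by (auto dest: injD)
  from eq have im: "(\<lambda>X\<in>Pobj A. phi ` X) = (\<lambda>X\<in>Pobj A. phi' ` X)"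
    unfolding m m' Pmor_def \<open>A = A'\<close> by simp
  have "phi = phi'"
    using m(2) m'(2) im unfolding \<open>A = A'\<close>
    by (rule extensional_eq_if_restrict_image_eq) (simp add: Pobj_def)
  with \<open>A = A'\<close> \<open>B = B'\<close> show "m = m'" using m m' by simp
qed

lemma inj_on_Ppmor: "inj_on Ppmor Sigma_mor"
proof (rule inj_onI)
  fix m m' assume "m \<in> Sigma_mor" "m' \<in> Sigma_mor" and eq: "Ppmor m = Ppmor m'"
  then obtain A B phi A' B' phi' where m: "m = (A, B, phi)" "phi \<in> extensional A"
    and m': "m' = (A', B', phi')" "phi' \<in> extensional A'"
    unfolding Sigma_mor_def by (auto simp: PiE_iff)
  from eq have "Ppobj A = Ppobj A'" "Ppobj B = Ppobj B'"
    unfolding m m' Ppmor_def by simp_all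
  then have "A = A'" "B = B'" using inj_Ppobj by (auto dest: injD)
  from eq have im: "(\<lambda>X\<in>Ppobj A. phi ` X) = (\<lambda>X\<in>Ppobj A. phi' ` X)"
    unfolding m m' Ppmor_def \<open>A = A'\<close> by simp
  have "phi = phi'"
    using m(2) m'(2) im unfolding \<open>A = A'\<close>
    by (rule extensional_eq_if_restrict_image_eq) (simp add: Ppobj_def)
  with \<open>A = A'\<close> \<open>B = B'\<close> show "m = m'" using m m' by simp
qed

lemma Gmor_Sigma_id: "Gmor (Sigma_id (ord l)) = Sigma_id (Gobj l)"
  unfolding Gmor_def Gobj_def by (simp add: Ppmor_Sigma_id Pmor_Sigma_id)

lemma Gmor_Sigma_comp:
  assumes "f \<in> Sigma_mor" and "fst (snd f) = fst g"
  shows "Gmor (Sigma_comp g f) = Sigma_comp (Gmor g) (Gmor f)"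
proof -
  have "fst (snd (Ppmor f)) = fst (Ppmor g)"
    using assms(2) by (cases f, cases g) (simp add: Ppmor_def)
  then show ?thesis
    using assms unfolding Gmor_def
    by (simp add: Ppmor_Sigma_comp Pmor_Sigma_comp Ppmor_in_Sigma_mor)
qed

lemma Gmor_in_Sigma_mor: "m \<in> Sigma_mor \<Longrightarrow> Gmor m \<in> Sigma_mor"
  unfolding Gmor_def by (intro Pmor_in_Sigma_mor Ppmor_in_Sigma_mor)

lemma inj_on_Gmor: "inj_on Gmor Sigma_mor"
proof -
  have "Gmor = Pmor \<circ> Ppmor" unfolding Gmor_def by auto
  moreover have "inj_on Pmor (Ppmor ` Sigma_mor)"
    using inj_on_Pmor by (rule inj_on_subset) (auto intro: Ppmor_in_Sigma_mor)
  ultimately show ?thesis using inj_on_Ppmor comp_inj_on by metis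
qed

lemma inj_ord: "inj ord"
  by (rule injI) (simp add: ord_def)

lemma inj_Gobj: "inj Gobj"
proof -
  have "Gobj = Pobj \<circ> Ppobj \<circ> ord" unfolding Gobj_def by auto
  with inj_Pobj inj_Ppobj inj_ord show ?thesis by (metis inj_compose)
qed

lemma card_Gobj: "card (Gobj l) = 2 ^ (2 ^ l - 1)"
  unfolding Gobj_def Pobj_def ord_def by (simp add: card_Pow card_Ppobj finite_Ppobj)

lemma Omega_mor_subset_Sigma_mor: "Omega_mor \<subseteq> Sigma_mor"
  unfolding Omega_mor_def Sigma_mor_def ord_def by auto

theorem proposition3p1:
  shows "inj Gobj
    \<and> inj_on Gmor Omega_mor
    \<and> (\<forall>l. Gmor (Sigma_id (ord l)) = Sigma_id (Gobj l))
    \<and> (\<forall>f\<in>Omega_mor. \<forall>g\<in>Omega_mor. fst (snd f) = fst g \<longrightarrow>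
          Gmor (Sigma_comp g f) = Sigma_comp (Gmor g) (Gmor f))
    \<and> (\<forall>f\<in>Omega_mor. Gmor f \<in> Sigma_mor)
    \<and> (\<exists>l m. card (Gobj (l + m)) \<noteq> card (Gobj l) + card (Gobj m)
          \<and> card (Gobj (l + m)) \<noteq> card (Gobj l) * card (Gobj m))"
proof -
  have "card (Gobj (1 + 1)) = 8" and "card (Gobj 1) = 2"
    by (simp_all add: card_Gobj)
  then have non_monoidal: "\<exists>l m. card (Gobj (l + m)) \<noteq> card (Gobj l) + card (Gobj m)
      \<and> card (Gobj (l + m)) \<noteq> card (Gobj l) * card (Gobj m)"
    by (intro exI[of _ 1]) simp
  show ?thesis
    using inj_Gobj inj_on_subset[OF inj_on_Gmor Omega_mor_subset_Sigma_mor] Gmor_Sigma_id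
      Gmor_Sigma_comp Gmor_in_Sigma_mor Omega_mor_subset_Sigma_mor non_monoidal
    by blast
qed

end
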